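(* Let $X$ be a metrizable space which is locally compact and $\sigma$-compact, and let $f\colon X\to X$ be a homeomorphism which is metric-independent expansive. Then $f^n$ is metric-independent expansive for every integer $n\neq 0$.
   Context: A homeomorphism $f$ of a metric space $(X,d)$ is expansive with respect to $d$ if there is $c>0$ such that for all $x\neq y$ there is $i\in\mathbb Z$ with $d(f^i(x),f^i(y))>c$. It is metric-independent expansive if it is expansive with respect to every metric compatible with the topology of $X$. *)

theory Defs
  imports "HOL-Analysis.Analysis"
begin

definition compatible_metric :: "'a topology \<Rightarrow> ('a \<Rightarrow> 'a \<Rightarrow> real) \<Rightarrow> bool" where
  "compatible_metric X d \<longleftrightarrow>
     Metric_space (topspace X) d \<and> Metric_space.mtopology (topspace X) d = X"

definition sigma_compact_space :: "'a topology \<Rightarrow> bool" where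
  "sigma_compact_space X \<longleftrightarrow>
     (\<exists>F. countable F \<and> (\<forall>K\<in>F. compactin X K) \<and> \<Union>F = topspace X)"

definition iter_int :: "'a topology \<Rightarrow> ('a \<Rightarrow> 'a) \<Rightarrow> int \<Rightarrow> 'a \<Rightarrow> 'a" where
  "iter_int X f n =
     (if 0 \<le> n then f ^^ nat n else (inv_into (topspace X) f) ^^ nat (- n))"

definition expansive_wrt :: "'a topology \<Rightarrow> ('a \<Rightarrow> 'a) \<Rightarrow> ('a \<Rightarrow> 'a \<Rightarrow> real) \<Rightarrow> bool" where
  "expansive_wrt X f d \<longleftrightarrow>
     (\<exists>c>0. \<forall>x\<in>topspace X. \<forall>y\<in>topspace X. x \<noteq> y \<longrightarrow>
        (\<exists>i::int. d (iter_int X f i x) (iter_int X f i y) > c))"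

definition metric_independent_expansive :: "'a topology \<Rightarrow> ('a \<Rightarrow> 'a) \<Rightarrow> bool" where
  "metric_independent_expansive X f \<longleftrightarrow>
     (\<forall>d. compatible_metric X d \<longrightarrow> expansive_wrt X f d)"

end

theory Submission
  imports Defs
begin

(*
  Fix a compatible metric d. Local compactness and sigma-compactness give a positive
  1-Lipschitz function psi that vanishes at infinity, and rho x y = min (d x y) (psi x + psi y)
  is a compatible metric in which all neighbourhoods of infinity become small. By metric
  independence f is rho-expansive with some constant c. Every homeomorphism h is uniformly
  continuous from d to rho: near infinity psi (h u) and psi (h v) are both small, and on the
  compact remainder h is uniformly continuous. For the finitely many iterates f^r with
  |r| < |n| this yields one delta > 0 such that d (f^(n m) x) (f^(n m) y) < delta forces
  rho (f^i x) (f^i y) <= c for every i = r + n m; so distinct points are moved at least delta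
  apart by some power of f^n.
*)

section \<open>Integer iterates\<close>

lemma iter_int_0 [simp]: "iter_int X f 0 x = x"
  by (simp add: iter_int_def)

context
  fixes X :: "'a topology" and f :: "'a \<Rightarrow> 'a"
  assumes bij: "bij_betw f (topspace X) (topspace X)"
begin

private abbreviation "f' \<equiv> inv_into (topspace X) f"

lemma iter_int_in_topspace: "x \<in> topspace X \<Longrightarrow> iter_int X f k x \<in> topspace X"
proof -
  have "(h ^^ m) x \<in> topspace X" if "h \<in> topspace X \<rightarrow> topspace X" "x \<in> topspace X" for h m x
    using that by (induction m) auto
  moreover have "f \<in> topspace X \<rightarrow> topspace X" "f' \<in> topspace X \<rightarrow> topspace X"
    using bij bij_betw_inv_into bij_betwE by blast+
  ultimately show "x \<in> topspace X \<Longrightarrow> iter_int X f k x \<in> topspace X"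
    by (simp add: iter_int_def)
qed

lemma iter_int_succ:
  assumes "x \<in> topspace X"
  shows "iter_int X f (k + 1) x = f (iter_int X f k x)"
proof (cases "k \<ge> 0")
  case True
  then show ?thesis by (simp add: iter_int_def nat_add_distrib)
next
  case False
  then have "nat (- k) = Suc (nat (- (k + 1)))"
    by simp
  with False have "iter_int X f k x = f' (iter_int X f (k + 1) x)"
    by (cases "k + 1 = 0") (auto simp: iter_int_def)
  then show ?thesis
    using bij assms iter_int_in_topspace by (simp add: bij_betw_inv_into_right)
qed

lemma iter_int_pred:
  assumes "x \<in> topspace X"
  shows "iter_int X f (k - 1) x = f' (iter_int X f k x)"
  using iter_int_succ[OF assms, of "k - 1"] bij assms iter_int_in_topspace
  by (metis bij_betw_inv_into_left diff_add_cancel)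

lemma iter_int_add:
  assumes "x \<in> topspace X"
  shows "iter_int X f a (iter_int X f b x) = iter_int X f (a + b) x"
proof (induction a rule: int_induct[where k = 0])
  case base
  show ?case by simp
next
  case (step1 i)
  have "iter_int X f (i + 1) (iter_int X f b x) = f (iter_int X f (i + b) x)"
    using step1 assms by (simp add: iter_int_succ iter_int_in_topspace)
  also have "\<dots> = iter_int X f (i + 1 + b) x"
    using iter_int_succ[OF assms, of "i + b"] by (simp add: ac_simps)
  finally show ?case .
next
  case (step2 i)
  have "iter_int X f (i - 1) (iter_int X f b x) = f' (iter_int X f (i + b) x)"
    using step2 assms by (simp add: iter_int_pred iter_int_in_topspace)
  also have "\<dots> = iter_int X f (i - 1 + b) x"
    using iter_int_pred[OF assms, of "i + b"] by (simp add: algebra_simps)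
  finally show ?case .
qed

lemma iter_int_iter_int:
  assumes "x \<in> topspace X"
  shows "iter_int X (iter_int X f n) m x = iter_int X f (n * m) x"
proof -
  let ?h = "iter_int X f n"
  have pow: "(?h ^^ j) y = iter_int X f (n * int j) y" if "y \<in> topspace X" for j y
    using that by (induction j) (auto simp: iter_int_add iter_int_in_topspace algebra_simps)
  have inv: "inv_into (topspace X) ?h y = iter_int X f (- n) y" if "y \<in> topspace X" for y
  proof (rule inv_into_f_eq)
    show "inj_on ?h (topspace X)"
      by (rule inj_on_inverseI[where g = "iter_int X f (- n)"]) (simp add: iter_int_add)
  qed (use that in \<open>simp_all add: iter_int_add iter_int_in_topspace\<close>)
  have inv_pow: "(inv_into (topspace X) ?h ^^ j) y = iter_int X f (- n * int j) y"
    if "y \<in> topspace X" for j y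
    using that by (induction j) (auto simp: iter_int_add iter_int_in_topspace inv algebra_simps)
  show ?thesis
    using pow[OF assms, of "nat m"] inv_pow[OF assms, of "nat (- m)"]
    by (simp add: iter_int_def)
qed

end

lemma continuous_map_iter_int:
  assumes "homeomorphic_map X X f"
  shows "continuous_map X X (iter_int X f k)"
proof -
  have "continuous_map X X (inv_into (topspace X) f)"
    using assms
    by (subst open_eq_continuous_inverse_map[symmetric, where f = f])
       (auto simp: homeomorphic_eq_everything_map inv_into_into f_inv_into_f)
  moreover have "continuous_map X X h \<Longrightarrow> continuous_map X X (h ^^ j)" for h j
    by (induction j) (auto intro: continuous_map_compose)
  ultimately show ?thesis
    using assms by (simp add: iter_int_def homeomorphic_imp_continuous_map)
qed

lemma homeomorphic_map_imp_bij_betw: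
  "homeomorphic_map X Y f \<Longrightarrow> bij_betw f (topspace X) (topspace Y)"
  by (simp add: bij_betw_def homeomorphic_eq_everything_map)

lemma homeomorphic_maps_iter_int:
  assumes "homeomorphic_map X X f"
  shows "homeomorphic_maps X X (iter_int X f k) (iter_int X f (- k))"
  using continuous_map_iter_int[OF assms] iter_int_add[OF homeomorphic_map_imp_bij_betw[OF assms]]
  by (simp add: homeomorphic_maps_def)

section \<open>A compatible metric collapsing infinity\<close>

lemma locally_compact_sigma_compact_open_cover:
  assumes "locally_compact_space X" "Hausdorff_space X" "sigma_compact_space X"
  obtains U L :: "nat \<Rightarrow> 'a set"
  where "\<And>j. openin X (U j)" "\<And>j. compactin X (L j)" "\<And>j. U j \<subseteq> L j"
    "(\<Union>j. U j) = topspace X"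
proof -
  obtain F where F: "countable F" "\<forall>K\<in>F. compactin X K" "\<Union>F = topspace X"
    using assms(3) unfolding sigma_compact_space_def by auto
  define K where "K = from_nat_into (insert {} F)"
  have range_K: "range K = insert {} F"
    using F(1) by (simp add: K_def)
  have K: "\<And>j. compactin X (K j)"
    using range_K F(2) by (metis compactin_empty insert_iff rangeI)
  have "\<forall>j. \<exists>U L. openin X U \<and> compactin X L \<and> K j \<subseteq> U \<and> U \<subseteq> L"
    using assms(1,2) K locally_compact_space_compact_closed_compact[of X] by meson
  then obtain U L where UL: "\<And>j. openin X (U j) \<and> compactin X (L j) \<and> K j \<subseteq> U j \<and> U j \<subseteq> L j"
    by metis
  show thesis
  proof (rule that)
    show "openin X (U j)" "compactin X (L j)" "U j \<subseteq> L j" for j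
      using UL by auto
    have "(\<Union>j. U j) \<subseteq> topspace X"
      using UL openin_subset by (intro UN_least) blast
    moreover have "topspace X \<subseteq> (\<Union>j. U j)"
    proof -
      have "topspace X = (\<Union>j. K j)"
        using F(3) range_K by simp
      also have "\<dots> \<subseteq> (\<Union>j. U j)"
        using UL by (intro UN_mono) auto
      finally show ?thesis .
    qed
    ultimately show "(\<Union>j. U j) = topspace X"
      by (rule equalityI)
  qed
qed

context
  fixes \<theta> :: "nat \<Rightarrow> 'a \<Rightarrow> real"
  assumes \<theta>_nonneg: "\<And>j x. 0 \<le> \<theta> j x" and \<theta>_le_1: "\<And>j x. \<theta> j x \<le> 1"
begin

lemma weighted_SUP_upper: "\<theta> j x / 2 ^ j \<le> (SUP j. \<theta> j x / 2 ^ j)"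
proof (rule cSUP_upper)
  show "bdd_above (range (\<lambda>j. \<theta> j x / 2 ^ j))"
  proof (rule bdd_aboveI2)
    fix j
    have "\<theta> j x / 2 ^ j \<le> \<theta> j x / 1"
      using \<theta>_nonneg by (intro divide_left_mono) auto
    also have "\<dots> \<le> 1"
      using \<theta>_le_1 by simp
    finally show "\<theta> j x / 2 ^ j \<le> 1" .
  qed
qed simp

lemma weighted_SUP_le_shift:
  assumes "\<And>j. \<theta> j x \<le> \<theta> j y + D" and "0 \<le> D"
  shows "(SUP j. \<theta> j x / 2 ^ j) \<le> (SUP j. \<theta> j y / 2 ^ j) + D"
proof (rule cSUP_least)
  fix j
  have "\<theta> j x / 2 ^ j \<le> \<theta> j y / 2 ^ j + D / 2 ^ j"
    using assms(1)[of j] by (simp add: divide_right_mono flip: add_divide_distrib)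
  also have "\<dots> \<le> (SUP j. \<theta> j y / 2 ^ j) + D"
    using weighted_SUP_upper[of j y] divide_left_mono[of 1 "2 ^ j" D] \<open>0 \<le> D\<close> by simp
  finally show "\<theta> j x / 2 ^ j \<le> (SUP j. \<theta> j y / 2 ^ j) + D" .
qed simp

lemma weighted_SUP_le_power:
  assumes "\<And>j. j < m \<Longrightarrow> \<theta> j x = 0"
  shows "(SUP j. \<theta> j x / 2 ^ j) \<le> (1 / 2) ^ m"
proof (rule cSUP_least)
  fix j
  show "\<theta> j x / 2 ^ j \<le> (1 / 2) ^ m"
  proof (cases "j < m")
    case False
    have "\<theta> j x / 2 ^ j \<le> (1 / 2) ^ j"
      using \<theta>_le_1[of j x] by (simp add: power_one_over divide_right_mono)
    also have "\<dots> \<le> (1 / 2) ^ m"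
      using False by (intro power_decreasing) auto
    finally show ?thesis .
  qed (simp add: assms)
qed simp

end

context Metric_space
begin

text \<open>The distance from x to the complement M - U, capped at 1; the cap also
  gives the value 1 instead of Inf {} when U = M.\<close>
definition truncated_dist_compl :: "'a set \<Rightarrow> 'a \<Rightarrow> real" where
  "truncated_dist_compl U x = Inf (insert 1 (d x ` (M - U)))"

lemma bdd_below_truncated_dist_compl: "bdd_below (insert 1 (d x ` (M - U)))"
  by (rule bdd_belowI[of _ 0]) auto

lemma truncated_dist_compl_le_dist: "z \<in> M - U \<Longrightarrow> truncated_dist_compl U x \<le> d x z"
  unfolding truncated_dist_compl_def using bdd_below_truncated_dist_compl by (intro cInf_lower) auto

lemma truncated_dist_compl_nonneg: "0 \<le> truncated_dist_compl U x"
  unfolding truncated_dist_compl_def by (rule cInf_greatest) auto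

lemma truncated_dist_compl_le_1: "truncated_dist_compl U x \<le> 1"
  unfolding truncated_dist_compl_def using bdd_below_truncated_dist_compl by (intro cInf_lower) auto

lemma truncated_dist_compl_eq_0: "x \<in> M - U \<Longrightarrow> truncated_dist_compl U x = 0"
  using truncated_dist_compl_le_dist[of x U x] truncated_dist_compl_nonneg[of U x] by simp

lemma truncated_dist_compl_Lipschitz:
  assumes "x \<in> M" "y \<in> M"
  shows "truncated_dist_compl U x \<le> truncated_dist_compl U y + d x y"
proof -
  have "truncated_dist_compl U x - d x y \<le> truncated_dist_compl U y"
    unfolding truncated_dist_compl_def[of U y]
  proof (rule cInf_greatest)
    fix w assume "w \<in> insert 1 (d y ` (M - U))"
    then show "truncated_dist_compl U x - d x y \<le> w"
    proof
      assume "w = 1"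
      then show ?thesis
        using truncated_dist_compl_le_1[of U x] nonneg[of x y] by linarith
    next
      assume "w \<in> d y ` (M - U)"
      then obtain z where z: "z \<in> M - U" "w = d y z"
        by auto
      then show ?thesis
        using truncated_dist_compl_le_dist[OF z(1), of x] triangle[of x y z] assms by auto
    qed
  qed auto
  then show ?thesis
    by linarith
qed

lemma truncated_dist_compl_pos:
  assumes "openin mtopology U" "x \<in> U"
  shows "0 < truncated_dist_compl U x"
proof -
  obtain r where r: "0 < r" "mball x r \<subseteq> U"
    using assms unfolding openin_mtopology by meson
  have "x \<in> M"
    using assms openin_subset by fastforce
  have "min 1 r \<le> truncated_dist_compl U x"
    unfolding truncated_dist_compl_def
  proof (rule cInf_greatest)
    fix w assume "w \<in> insert 1 (d x ` (M - U))"
    then show "min 1 r \<le> w"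
    proof
      assume "w \<in> d x ` (M - U)"
      then obtain z where "z \<in> M - U" "w = d x z"
        by auto
      with r \<open>x \<in> M\<close> have "\<not> d x z < r"
        by auto
      with \<open>w = d x z\<close> show ?thesis
        by simp
    qed simp
  qed auto
  then show ?thesis
    using r by simp
qed

lemma Lipschitz_weight_vanishing_at_infinity:
  assumes "locally_compact_space mtopology" "sigma_compact_space mtopology"
  obtains \<psi> where "\<And>x. 0 \<le> \<psi> x" "\<And>x. x \<in> M \<Longrightarrow> 0 < \<psi> x"
    "\<And>x y. x \<in> M \<Longrightarrow> y \<in> M \<Longrightarrow> \<psi> x \<le> \<psi> y + d x y"
    "\<And>c. 0 < c \<Longrightarrow> \<exists>L. compactin mtopology L \<and> {x \<in> M. c \<le> \<psi> x} \<subseteq> L"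
proof -
  obtain U L :: "nat \<Rightarrow> 'a set" where open_U: "\<And>j. openin mtopology (U j)"
    and compact_L: "\<And>j. compactin mtopology (L j)" and U_sub_L: "\<And>j. U j \<subseteq> L j"
    and cover: "(\<Union>j. U j) = topspace mtopology"
    using locally_compact_sigma_compact_open_cover[OF assms(1) Hausdorff_space_mtopology assms(2)]
    by metis
  let ?\<theta> = "\<lambda>j. truncated_dist_compl (U j)"
  note weighted = weighted_SUP_upper[of ?\<theta>] weighted_SUP_le_shift[of ?\<theta>] weighted_SUP_le_power[of ?\<theta>]
  note weighted = weighted[OF truncated_dist_compl_nonneg truncated_dist_compl_le_1]
  show thesis
  proof (rule that[of "\<lambda>x. SUP j. ?\<theta> j x / 2 ^ j"])
    show "0 \<le> (SUP j. ?\<theta> j x / 2 ^ j)" for x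
      using weighted(1)[of 0 x] truncated_dist_compl_nonneg[of "U 0" x] by simp
    show "0 < (SUP j. ?\<theta> j x / 2 ^ j)" if x: "x \<in> M" for x
    proof -
      obtain j where "x \<in> U j"
        using cover x by auto
      then have "0 < ?\<theta> j x / 2 ^ j"
        using open_U truncated_dist_compl_pos by simp
      then show ?thesis
        using weighted(1)[of j x] by linarith
    qed
    show "(SUP j. ?\<theta> j x / 2 ^ j) \<le> (SUP j. ?\<theta> j y / 2 ^ j) + d x y" if "x \<in> M" "y \<in> M" for x y
      using that by (intro weighted(2) truncated_dist_compl_Lipschitz nonneg)
    show "\<exists>K. compactin mtopology K \<and> {x \<in> M. c \<le> (SUP j. ?\<theta> j x / 2 ^ j)} \<subseteq> K"
      if "0 < c" for c
    proof -
      obtain m where m: "(1 / 2) ^ m < c"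
        using real_arch_pow_inv[OF \<open>0 < c\<close>, of "1 / 2"] by auto
      have "compactin mtopology (\<Union>j<m. L j)"
        using compact_L by (intro compactin_Union) auto
      moreover have "x \<in> (\<Union>j<m. L j)" if "x \<in> M" "c \<le> (SUP j. ?\<theta> j x / 2 ^ j)" for x
      proof (rule ccontr)
        assume "x \<notin> (\<Union>j<m. L j)"
        then have "?\<theta> j x = 0" if "j < m" for j
          using U_sub_L \<open>x \<in> M\<close> that by (intro truncated_dist_compl_eq_0) blast
        then show False
          using weighted(3)[of m x] m that(2) by fastforce
      qed
      ultimately show ?thesis
        by blast
    qed
  qed
qed

lemma Metric_space_min_weight:
  assumes "\<And>x. 0 \<le> \<psi> x" "\<And>x. x \<in> M \<Longrightarrow> 0 < \<psi> x"
    and "\<And>x y. x \<in> M \<Longrightarrow> y \<in> M \<Longrightarrow> \<psi> x \<le> \<psi> y + d x y"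
  shows "Metric_space M (\<lambda>x y. min (d x y) (\<psi> x + \<psi> y))"
proof
  fix x y z assume xyz: "x \<in> M" "y \<in> M" "z \<in> M"
  have "\<psi> z \<le> \<psi> y + d y z"
    using assms(3)[of z y] xyz commute[of z y] by simp
  then show "min (d x z) (\<psi> x + \<psi> z) \<le> min (d x y) (\<psi> x + \<psi> y) + min (d y z) (\<psi> y + \<psi> z)"
    using triangle[of x y z] assms(1)[of y] assms(3)[of x y] xyz by (simp add: min_def)
next
  fix x y assume "x \<in> M" "y \<in> M"
  then show "(min (d x y) (\<psi> x + \<psi> y) = 0) = (x = y)"
    using assms(2)[of x] assms(2)[of y] by (auto simp: min_def)
qed (auto simp: commute add.commute assms(1) add_nonneg_nonneg)

lemma mtopology_min_weight:
  assumes "\<And>x. 0 \<le> \<psi> x" "\<And>x. x \<in> M \<Longrightarrow> 0 < \<psi> x"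
    and "\<And>x y. x \<in> M \<Longrightarrow> y \<in> M \<Longrightarrow> \<psi> x \<le> \<psi> y + d x y"
  shows "Metric_space.mtopology M (\<lambda>x y. min (d x y) (\<psi> x + \<psi> y)) = mtopology"
proof -
  interpret W: Metric_space M "\<lambda>x y. min (d x y) (\<psi> x + \<psi> y)"
    using Metric_space_min_weight[OF assms] .
  have "mball x r \<subseteq> W.mball x r" for x r
    by auto
  moreover have "W.mball x (min r (\<psi> x)) \<subseteq> mball x r" for x r
  proof
    fix y assume "y \<in> W.mball x (min r (\<psi> x))"
    then have "x \<in> M" "y \<in> M" "min (d x y) (\<psi> x + \<psi> y) < min r (\<psi> x)"
      by auto
    moreover have "0 \<le> \<psi> y"
      by (rule assms(1))
    ultimately show "y \<in> mball x r"
      by (auto simp: min_def split: if_splits)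
  qed
  moreover have "0 < min r (\<psi> x)" if "x \<in> M" "0 < r" for x r
    using assms(2) that by simp
  ultimately have "(\<exists>r>0. W.mball x r \<subseteq> U) \<longleftrightarrow> (\<exists>r>0. mball x r \<subseteq> U)" if "x \<in> M" for x U
    using that by (meson order_trans)
  then show ?thesis
    unfolding topology_eq openin_mtopology W.openin_mtopology by blast
qed

lemma uniformly_continuous_near_compactin:
  assumes "Metric_space M' d'" and h: "continuous_map mtopology (Metric_space.mtopology M' d') h"
    and K: "compactin mtopology K" and "0 < \<epsilon>"
  shows "\<forall>\<^sub>F \<delta> in at_right 0. \<forall>u\<in>K. \<forall>v\<in>M. d u v < \<delta> \<longrightarrow> d' (h u) (h v) < \<epsilon>"
proof -
  interpret M': Metric_space M' d'
    by fact
  have "K \<subseteq> M"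
    using K compactin_subset_topspace by fastforce
  have "\<exists>\<eta>>0. \<forall>w. w \<in> M \<and> d p w < \<eta> \<longrightarrow> d' (h p) (h w) < \<epsilon> / 2" if "p \<in> K" for p
    using h \<open>0 < \<epsilon>\<close> \<open>K \<subseteq> M\<close> that half_gt_zero
    unfolding metric_continuous_map[OF assms(1)] by blast
  then obtain \<eta> where \<eta>: "\<And>p. p \<in> K \<Longrightarrow> 0 < \<eta> p"
    and h_\<eta>: "\<And>p w. p \<in> K \<Longrightarrow> w \<in> M \<Longrightarrow> d p w < \<eta> p \<Longrightarrow> d' (h p) (h w) < \<epsilon> / 2"
    by metis
  have "K \<subseteq> \<Union> ((\<lambda>p. mball p (\<eta> p / 2)) ` K)"
    using \<open>K \<subseteq> M\<close> \<eta> by force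
  then obtain \<F> where "finite \<F>" "\<F> \<subseteq> (\<lambda>p. mball p (\<eta> p / 2)) ` K" "K \<subseteq> \<Union>\<F>"
    using compactinD[OF K, of "(\<lambda>p. mball p (\<eta> p / 2)) ` K"] by auto
  then obtain P where P: "finite P" "P \<subseteq> K" and cover: "K \<subseteq> (\<Union>p\<in>P. mball p (\<eta> p / 2))"
    using finite_subset_image[of \<F> "\<lambda>p. mball p (\<eta> p / 2)" K] by blast
  have "\<forall>\<^sub>F \<delta> in at_right 0. \<forall>p\<in>P. \<delta> \<le> \<eta> p / 2"
  proof (rule eventually_ball_finite[OF P(1)], rule ballI)
    fix p assume "p \<in> P"
    then have "0 < \<eta> p / 2"
      using P(2) \<eta> by auto
    then show "\<forall>\<^sub>F \<delta> in at_right 0. \<delta> \<le> \<eta> p / 2"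
      unfolding eventually_at_right_field by (auto intro!: exI[of _ "\<eta> p / 2"])
  qed
  then show ?thesis
  proof (rule eventually_mono, intro ballI impI)
    fix \<delta> u v assume \<delta>: "\<forall>p\<in>P. \<delta> \<le> \<eta> p / 2" and "u \<in> K" "v \<in> M" "d u v < \<delta>"
    then obtain p where p: "p \<in> P" "u \<in> mball p (\<eta> p / 2)"
      using cover by blast
    then have "p \<in> K" "p \<in> M" "u \<in> M"
      using P(2) \<open>K \<subseteq> M\<close> by auto
    have "d p v < \<eta> p"
      using triangle[of p u v] p \<delta> \<open>d u v < \<delta>\<close> \<open>p \<in> M\<close> \<open>u \<in> M\<close> \<open>v \<in> M\<close> by fastforce
    moreover have "d p u < \<eta> p"
      using p \<eta>[OF \<open>p \<in> K\<close>] by simp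
    ultimately have "d' (h p) (h v) < \<epsilon> / 2" "d' (h u) (h p) < \<epsilon> / 2"
      using h_\<eta> \<open>p \<in> K\<close> \<open>u \<in> M\<close> \<open>v \<in> M\<close> M'.commute by auto
    moreover have "h p \<in> M'" "h u \<in> M'" "h v \<in> M'"
      using h \<open>p \<in> M\<close> \<open>u \<in> M\<close> \<open>v \<in> M\<close> by (auto simp: continuous_map_def)
    ultimately show "d' (h u) (h v) < \<epsilon>"
      using M'.triangle[of "h u" "h p" "h v"] by linarith
  qed
qed

lemma homeomorphic_maps_uniform_min_weight:
  assumes hg: "homeomorphic_maps mtopology mtopology h g"
    and proper: "\<And>c. 0 < c \<Longrightarrow> \<exists>L. compactin mtopology L \<and> {x \<in> M. c \<le> \<psi> x} \<subseteq> L"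
    and "0 < c"
  shows "\<forall>\<^sub>F \<delta> in at_right 0. \<forall>u\<in>M. \<forall>v\<in>M.
           d u v < \<delta> \<longrightarrow> min (d (h u) (h v)) (\<psi> (h u) + \<psi> (h v)) \<le> c"
proof -
  have h: "continuous_map mtopology mtopology h" and g: "continuous_map mtopology mtopology g"
    and gh: "\<And>u. u \<in> M \<Longrightarrow> g (h u) = u"
    using hg by (auto simp: homeomorphic_maps_def)
  have hM: "h u \<in> M" if "u \<in> M" for u
    using h that by (auto simp: continuous_map_def)
  obtain L where L: "compactin mtopology L" "{x \<in> M. c / 2 \<le> \<psi> x} \<subseteq> L"
    using proper[of "c / 2"] \<open>0 < c\<close> by auto
  have "compactin mtopology (g ` L)"
    using L(1) g by (rule image_compactin)
  then have "\<forall>\<^sub>F \<delta> in at_right 0. \<forall>u\<in>g ` L. \<forall>v\<in>M. d u v < \<delta> \<longrightarrow> d (h u) (h v) < c"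
    using uniformly_continuous_near_compactin[OF Metric_space_axioms h] \<open>0 < c\<close> by blast
  then show ?thesis
  proof (rule eventually_mono, intro ballI impI)
    fix \<delta> u v
    assume near: "\<forall>u\<in>g ` L. \<forall>v\<in>M. d u v < \<delta> \<longrightarrow> d (h u) (h v) < c"
      and "u \<in> M" "v \<in> M" "d u v < \<delta>"
    have "u \<in> g ` L" if "h u \<in> L" "u \<in> M" for u
      using that gh by (metis image_eqI)
    then consider "u \<in> g ` L" | "v \<in> g ` L" | "\<psi> (h u) < c / 2" "\<psi> (h v) < c / 2"
      using L(2) hM \<open>u \<in> M\<close> \<open>v \<in> M\<close> by force
    then show "min (d (h u) (h v)) (\<psi> (h u) + \<psi> (h v)) \<le> c"
    proof cases
      case 1
      then show ?thesis
        using near \<open>v \<in> M\<close> \<open>d u v < \<delta>\<close> by force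
    next
      case 2
      then show ?thesis
        using near \<open>u \<in> M\<close> \<open>d u v < \<delta>\<close> commute by force
    qed simp
  qed
qed

lemma compatible_metric_homeomorphisms_uniformly_continuous:
  assumes "locally_compact_space mtopology" "sigma_compact_space mtopology"
  obtains \<rho> where "compatible_metric mtopology \<rho>"
    "\<And>h g c. homeomorphic_maps mtopology mtopology h g \<Longrightarrow> 0 < c \<Longrightarrow>
      \<forall>\<^sub>F \<delta> in at_right 0. \<forall>u\<in>M. \<forall>v\<in>M. d u v < \<delta> \<longrightarrow> \<rho> (h u) (h v) \<le> c"
proof -
  obtain \<psi> where \<psi>: "\<And>x. 0 \<le> \<psi> x" "\<And>x. x \<in> M \<Longrightarrow> 0 < \<psi> x"
      "\<And>x y. x \<in> M \<Longrightarrow> y \<in> M \<Longrightarrow> \<psi> x \<le> \<psi> y + d x y"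
    and proper: "\<And>c. 0 < c \<Longrightarrow> \<exists>L. compactin mtopology L \<and> {x \<in> M. c \<le> \<psi> x} \<subseteq> L"
    using Lipschitz_weight_vanishing_at_infinity[OF assms] by blast
  show thesis
  proof (rule that)
    show "compatible_metric mtopology (\<lambda>x y. min (d x y) (\<psi> x + \<psi> y))"
      using Metric_space_min_weight[OF \<psi>] mtopology_min_weight[OF \<psi>]
      by (simp add: compatible_metric_def)
  qed (use homeomorphic_maps_uniform_min_weight proper in blast)
qed

end

section \<open>Expansivity of powers\<close>

lemma eventually_at_right_0_obtain:
  assumes "\<forall>\<^sub>F \<delta> in at_right (0::real). P \<delta>"
  obtains \<delta> where "0 < \<delta>" "P \<delta>"
  using eventually_happens'[OF trivial_limit_at_right_real eventually_conj[OF eventually_at_right_less assms]]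
  by blast

lemma expansive_wrt_iter_int:
  assumes bij: "bij_betw f (topspace X) (topspace X)" and "n \<noteq> 0"
    and "expansive_wrt X f \<rho>"
    and uniform: "\<And>r c. 0 < c \<Longrightarrow> \<forall>\<^sub>F \<delta> in at_right 0. \<forall>u\<in>topspace X. \<forall>v\<in>topspace X.
                    d u v < \<delta> \<longrightarrow> \<rho> (iter_int X f r u) (iter_int X f r v) \<le> c"
  shows "expansive_wrt X (iter_int X f n) d"
proof -
  obtain c where "0 < c" and sep: "\<And>x y. x \<in> topspace X \<Longrightarrow> y \<in> topspace X \<Longrightarrow> x \<noteq> y \<Longrightarrow>
      \<exists>i. c < \<rho> (iter_int X f i x) (iter_int X f i y)"
    using assms(3) unfolding expansive_wrt_def by blast
  have "\<forall>\<^sub>F \<delta> in at_right 0. \<forall>r\<in>{-\<bar>n\<bar><..<\<bar>n\<bar>}. \<forall>u\<in>topspace X. \<forall>v\<in>topspace X.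
          d u v < \<delta> \<longrightarrow> \<rho> (iter_int X f r u) (iter_int X f r v) \<le> c"
    using uniform[OF \<open>0 < c\<close>] by (intro eventually_ball_finite) auto
  then obtain \<delta> where "0 < \<delta>" and \<delta>: "\<And>r u v. \<bar>r\<bar> < \<bar>n\<bar> \<Longrightarrow> u \<in> topspace X \<Longrightarrow> v \<in> topspace X \<Longrightarrow>
      d u v < \<delta> \<Longrightarrow> \<rho> (iter_int X f r u) (iter_int X f r v) \<le> c"
    by (rule eventually_at_right_0_obtain) (auto simp: abs_less_iff)
  show ?thesis
    unfolding expansive_wrt_def
  proof (intro exI[of _ "\<delta> / 2"] conjI ballI impI)
    fix x y assume x: "x \<in> topspace X" and y: "y \<in> topspace X" and "x \<noteq> y"
    then obtain i where i: "c < \<rho> (iter_int X f i x) (iter_int X f i y)"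
      using sep by blast
    let ?g = "iter_int X f n" and ?m = "i div n"
    let ?u = "iter_int X ?g ?m x" and ?v = "iter_int X ?g ?m y"
    have "?u \<in> topspace X" "?v \<in> topspace X"
      using x y by (simp_all add: iter_int_iter_int[OF bij] iter_int_in_topspace[OF bij])
    have "iter_int X f i z = iter_int X f (i mod n) (iter_int X ?g ?m z)" if "z \<in> topspace X" for z
      using that by (simp add: iter_int_add[OF bij] iter_int_iter_int[OF bij] iter_int_in_topspace[OF bij])
    then have "c < \<rho> (iter_int X f (i mod n) ?u) (iter_int X f (i mod n) ?v)"
      using i x y by simp
    moreover have "\<bar>i mod n\<bar> < \<bar>n\<bar>"
      using \<open>n \<noteq> 0\<close> by (rule abs_mod_less)
    ultimately have "\<delta> \<le> d ?u ?v"
      using \<delta> \<open>?u \<in> topspace X\<close> \<open>?v \<in> topspace X\<close> by (meson not_le)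
    then show "\<exists>k. \<delta> / 2 < d (iter_int X ?g k x) (iter_int X ?g k y)"
      using \<open>0 < \<delta>\<close> by (intro exI[of _ ?m]) simp
  qed (use \<open>0 < \<delta>\<close> in simp)
qed

theorem mainTheorem8:
  fixes X :: "'a topology" and f :: "'a \<Rightarrow> 'a" and n :: int
  assumes "metrizable_space X"
    and "locally_compact_space X"
    and "sigma_compact_space X"
    and "homeomorphic_map X X f"
    and "metric_independent_expansive X f"
    and "n \<noteq> 0"
  shows "metric_independent_expansive X (iter_int X f n)"
  unfolding metric_independent_expansive_def
proof (intro allI impI)
  fix d assume "compatible_metric X d"
  then interpret Metric_space "topspace X" d
    by (simp add: compatible_metric_def)
  have X: "mtopology = X"
    using \<open>compatible_metric X d\<close> by (simp add: compatible_metric_def)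
  obtain \<rho> where "compatible_metric X \<rho>"
    and uniform: "\<And>h g c. homeomorphic_maps X X h g \<Longrightarrow> 0 < c \<Longrightarrow>
      \<forall>\<^sub>F \<delta> in at_right 0. \<forall>u\<in>topspace X. \<forall>v\<in>topspace X. d u v < \<delta> \<longrightarrow> \<rho> (h u) (h v) \<le> c"
    using compatible_metric_homeomorphisms_uniformly_continuous assms(2,3) unfolding X by blast
  then have "expansive_wrt X f \<rho>"
    using assms(5) by (simp add: metric_independent_expansive_def)
  then show "expansive_wrt X (iter_int X f n) d"
    using uniform[OF homeomorphic_maps_iter_int[OF assms(4)]]
    by (rule expansive_wrt_iter_int[OF homeomorphic_map_imp_bij_betw[OF assms(4)] assms(6)])
qed

end
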